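(* Consider a ROS~2 application executed on a single processor by the events executor with the two-queue mechanism described in the context, under the standing assumptions of the context. If $\tau_b$ is the currently running subtask and $\tau_a$ is any released but unscheduled subtask in the executor's queues, then their priorities satisfy $P_a \leq P_b$.
   Context: Model: a ROS~2 application is abstracted as a forest of trees of subtasks. Roots are released periodically/sporadically with known integer job priorities; a child subtask is released immediately when its parent completes, and inherits its parent's priority (fixed job-level priority). Execution is non-preemptive on a single processor; larger priority values mean higher priority. Executor mechanism: released root subtasks go into a priority queue (root_queue); a released child subtask is assigned the value latest_priority and pushed onto a LIFO queue (child_queue); at each scheduling decision (which occurs whenever the processor becomes free) the tops of the two queues are compared, the one of greater priority is popped and executed, and latest_priority is set to its priority. *)

theory Defs
  imports Main
begin

text \<open>Jobs (subtask instances) have type 'j.  prio j is the fixed job-level priority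
  (larger = higher).  children j lists the child subtasks released when j completes
  (pushed onto the LIFO queue in list order).  roots is the set of root jobs.\<close>

record 'j exec_state =
  rq :: "'j set"                 \<comment> \<open>root_queue (priority queue)\<close>
  cq :: "('j \<times> int) list"        \<comment> \<open>child_queue (LIFO, head = top), with assigned value\<close>
  latest :: int
  running :: "'j option"         \<comment> \<open>currently running subtask (None = processor free)\<close>
  rel :: "'j set"

definition pending :: "('j, 'b) exec_state_scheme \<Rightarrow> 'j set" where
  "pending s = rq s \<union> fst ` set (cq s)"

definition exec_init :: "'j exec_state \<Rightarrow> bool" where
  "exec_init s \<longleftrightarrow> rq s = {} \<and> cq s = [] \<and> running s = None \<and> rel s = {}"

text \<open>A root job is released (sporadically, at any time).  Scheduling decisions are
  instantaneous: while the processor is free and some queue is non-empty, only a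
  dispatch step is enabled.\<close>
definition release_step :: "'j set \<Rightarrow> 'j exec_state \<Rightarrow> 'j exec_state \<Rightarrow> bool" where
  "release_step roots s s' \<longleftrightarrow>
     \<not> (running s = None \<and> pending s \<noteq> {}) \<and>
     (\<exists>r. r \<in> roots \<and> r \<notin> rel s \<and>
          s' = s\<lparr>rq := insert r (rq s), rel := insert r (rel s)\<rparr>)"

definition complete_step :: "('j \<Rightarrow> 'j list) \<Rightarrow> 'j exec_state \<Rightarrow> 'j exec_state \<Rightarrow> bool" where
  "complete_step children s s' \<longleftrightarrow>
     (\<exists>b. running s = Some b \<and>
          s' = s\<lparr>cq := map (\<lambda>c. (c, latest s)) (rev (children b)) @ cq s,
                 running := None,
                 rel := rel s \<union> set (children b)\<rparr>)"

definition dispatch_step :: "('j \<Rightarrow> int) \<Rightarrow> 'j exec_state \<Rightarrow> 'j \<Rightarrow> 'j exec_state \<Rightarrow> bool" where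
  "dispatch_step prio s b s' \<longleftrightarrow> running s = None \<and>
     ((b \<in> rq s \<and> (\<forall>x\<in>rq s. prio x \<le> prio b) \<and>
        (\<forall>c v cs. cq s = (c, v) # cs \<longrightarrow> v \<le> prio b) \<and>
        s' = s\<lparr>rq := rq s - {b}, running := Some b, latest := prio b\<rparr>)
    \<or> (\<exists>v cs. cq s = (b, v) # cs \<and> (\<forall>x\<in>rq s. prio x \<le> v) \<and>
        s' = s\<lparr>cq := cs, running := Some b, latest := v\<rparr>))"

definition exec_step ::
  "('j \<Rightarrow> int) \<Rightarrow> 'j set \<Rightarrow> ('j \<Rightarrow> 'j list) \<Rightarrow> 'j exec_state \<Rightarrow> 'j exec_state \<Rightarrow> bool" where
  "exec_step prio roots children s s' \<longleftrightarrow>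
     release_step roots s s' \<or> complete_step children s s' \<or> (\<exists>b. dispatch_step prio s b s')"

definition exec_reachable ::
  "('j \<Rightarrow> int) \<Rightarrow> 'j set \<Rightarrow> ('j \<Rightarrow> 'j list) \<Rightarrow> 'j exec_state \<Rightarrow> bool" where
  "exec_reachable prio roots children s \<longleftrightarrow>
     (\<exists>s0. exec_init s0 \<and> (exec_step prio roots children)\<^sup>*\<^sup>* s0 s)"

end

theory Submission
  imports Defs
begin

text \<open>Every entry of the child queue carries its own job's priority, because a child
  is pushed with latest_priority, which is the priority of the parent that just ran
  and hence (by inheritance) of the child.  Children are pushed on top when their parent
  completes, and the running job always dominates the whole child queue, so the queue
  stays sorted non-increasingly and its top bounds every entry.  A dispatched job beats
  both queue tops, hence dominates everything still pending.\<close>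

definition exec_inv :: "('j \<Rightarrow> int) \<Rightarrow> 'j exec_state \<Rightarrow> bool" where
  "exec_inv prio s \<longleftrightarrow>
     (\<forall>p \<in> set (cq s). snd p = prio (fst p)) \<and>
     sorted_wrt (\<lambda>x y. prio y \<le> prio x) (map fst (cq s)) \<and>
     (\<forall>b. running s = Some b \<longrightarrow> latest s = prio b \<and> (\<forall>c \<in> fst ` set (cq s). prio c \<le> prio b))"

lemma exec_inv_init: "exec_init s \<Longrightarrow> exec_inv prio s"
  by (simp add: exec_init_def exec_inv_def)

lemma exec_inv_release_step:
  "release_step roots s s' \<Longrightarrow> exec_inv prio s \<Longrightarrow> exec_inv prio s'"
  unfolding release_step_def exec_inv_def by (elim conjE exE) simp

lemma exec_inv_complete_step:
  assumes inherit: "\<And>j c. c \<in> set (children j) \<Longrightarrow> prio c = prio j"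
    and step: "complete_step children s s'" and inv: "exec_inv prio s"
  shows "exec_inv prio s'"
proof -
  obtain b where running: "running s = Some b"
    and s': "s' = s\<lparr>cq := map (\<lambda>c. (c, latest s)) (rev (children b)) @ cq s,
                    running := None, rel := rel s \<union> set (children b)\<rparr>"
    using step by (auto simp: complete_step_def)
  have "latest s = prio b" and "\<forall>c \<in> fst ` set (cq s). prio c \<le> prio b"
    using inv running by (auto simp: exec_inv_def)
  moreover have "sorted_wrt (\<lambda>x y. prio y \<le> prio x) (rev (children b))"
    by (rule sorted_wrt_mono_rel[OF _ sorted_wrt_true]) (simp add: inherit)
  ultimately show ?thesis
    using inv inherit by (auto simp: s' exec_inv_def sorted_wrt_append comp_def)
qed

lemma exec_inv_child_queue_le_top:
  assumes "exec_inv prio s" and "cq s = (t, v) # cs" and "c \<in> fst ` set (cq s)"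
  shows "prio c \<le> v"
  using assms by (force simp: exec_inv_def)

lemma exec_inv_dispatch_step:
  assumes step: "dispatch_step prio s b s'" and inv: "exec_inv prio s"
  shows "exec_inv prio s'"
  using step unfolding dispatch_step_def
proof (elim conjE disjE exE)
  assume top_le: "\<forall>t v cs. cq s = (t, v) # cs \<longrightarrow> v \<le> prio b"
    and s': "s' = s\<lparr>rq := rq s - {b}, running := Some b, latest := prio b\<rparr>"
  have "prio c \<le> prio b" if c: "c \<in> fst ` set (cq s)" for c
  proof -
    obtain t v cs where top: "cq s = (t, v) # cs"
      using c by (cases "cq s") auto
    show ?thesis
      using exec_inv_child_queue_le_top[OF inv top c] top_le top by force
  qed
  then show ?thesis
    using inv by (simp add: s' exec_inv_def)
next
  fix v cs
  assume top: "cq s = (b, v) # cs"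
    and s': "s' = s\<lparr>cq := cs, running := Some b, latest := v\<rparr>"
  have "v = prio b" and "\<forall>c \<in> fst ` set cs. prio c \<le> prio b"
    using inv exec_inv_child_queue_le_top[OF inv top] by (auto simp: top exec_inv_def)
  then show ?thesis
    using inv by (simp add: top s' exec_inv_def)
qed

lemma exec_inv_reachable:
  assumes inherit: "\<And>j c. c \<in> set (children j) \<Longrightarrow> prio c = prio j"
    and reach: "exec_reachable prio roots children s"
  shows "exec_inv prio s"
proof -
  obtain s0 where "exec_init s0" and steps: "(exec_step prio roots children)\<^sup>*\<^sup>* s0 s"
    using reach by (auto simp: exec_reachable_def)
  from steps show ?thesis
  proof (induction rule: rtranclp_induct)
    case base
    show ?case using \<open>exec_init s0\<close> by (rule exec_inv_init)
  next
    case (step s s')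
    then show ?case
      by (auto simp: exec_step_def intro: exec_inv_release_step
          exec_inv_complete_step[OF inherit] exec_inv_dispatch_step)
  qed
qed

lemma exec_reachable_dispatch_step:
  "exec_reachable prio roots children s \<Longrightarrow> dispatch_step prio s b s' \<Longrightarrow>
   exec_reachable prio roots children s'"
  unfolding exec_reachable_def
  by (blast intro: rtranclp.rtrancl_into_rtrancl exec_step_def[THEN iffD2])

lemma dispatch_step_root_queue_le:
  assumes "exec_inv prio s" and "dispatch_step prio s b s'" and "x \<in> rq s'"
  shows "prio x \<le> prio b"
  using assms by (auto simp: dispatch_step_def exec_inv_def)

lemma exec_inv_running_child_queue_le:
  assumes "exec_inv prio s" and "running s = Some b" and "a \<in> fst ` set (cq s)"
  shows "prio a \<le> prio b"
  using assms by (auto simp: exec_inv_def)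

theorem lemma3:
  fixes prio :: "'j \<Rightarrow> int" and roots :: "'j set" and children :: "'j \<Rightarrow> 'j list"
  assumes inherit: "\<And>j c. c \<in> set (children j) \<Longrightarrow> prio c = prio j"
    and roots_no_parent: "\<And>j c. c \<in> set (children j) \<Longrightarrow> c \<notin> roots"
    and unique_parent: "\<And>j1 j2 c. c \<in> set (children j1) \<Longrightarrow> c \<in> set (children j2) \<Longrightarrow> j1 = j2"
    and distinct_children: "\<And>j. distinct (children j)"
    and reach: "exec_reachable prio roots children s"
    and disp: "dispatch_step prio s b s'"
    and a_pending: "a \<in> pending s'"
  shows "prio a \<le> prio b"
proof -
  have inv: "exec_inv prio s" and inv': "exec_inv prio s'"
    using reach exec_reachable_dispatch_step[OF reach disp]
    by (auto intro: exec_inv_reachable[where prio = prio, OF inherit])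
  have "running s' = Some b"
    using disp by (auto simp: dispatch_step_def)
  then show ?thesis
    using a_pending dispatch_step_root_queue_le[OF inv disp]
      exec_inv_running_child_queue_le[OF inv'] by (auto simp: pending_def)
qed

end
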